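(* Let $P=\{(u_1,v_1),\ldots,(u_n,v_n)\}\subseteq\{a,b\}^*\times\{a,b\}^*$ with $n\ge 3$, and let $W\subseteq F(\Gamma)\times F(\Gamma)$ be the set of pairs constructed from $P$ as described in the context. If $P$ has a solution as an instance of Restricted PCP, then $W$ has a solution as an instance of the Identity Correspondence Problem, i.e. there is a nonempty finite sequence of pairs from $W$ whose componentwise product in $F(\Gamma)\times F(\Gamma)$ equals $(\varepsilon,\varepsilon)$.
   Context: For a set $H$, $F(H)$ denotes the free group on $H$; $\varepsilon$ is its identity (the empty word), and pairs of elements of free groups are multiplied componentwise. Restricted PCP: given $P=\{(u_1,v_1),\ldots,(u_n,v_n)\}\subseteq\{a,b\}^*\times\{a,b\}^*$ with $n\ge3$, a solution is a finite (possibly empty) sequence $l_1,\ldots,l_k$ with $2\le l_i\le n-1$ such that $u_1u_{l_1}\cdots u_{l_k}u_n=v_1v_{l_1}\cdots v_{l_k}v_n$. Construction of $W$. Let $\Gamma_i=\{a_i,b_i\}$ for $1\le i\le4$ and $\Gamma_B=\{x_1,\ldots,x_8\}$ be pairwise disjoint sets of letters, and $\Gamma=\Gamma_1\cup\Gamma_2\cup\Gamma_3\cup\Gamma_4\cup\Gamma_B$. Let $\delta_i:F(\{a,b\})\to F(\Gamma_i)$ be the homomorphism with $\delta_i(a)=a_i$, $\delta_i(b)=b_i$, and set $u_{ik}=\delta_i(u_k)$, $v_{ik}=\delta_i(v_k)$. For a positive integer $j$ let $\phi_i(j)=a_i^jb_i$ and $\psi_i(j)=(a_i^{-1})^jb_i^{-1}$.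 Put $x_0:=x_8$. For $p=1,2,3,4$ define $W_{4(p-1)}=\{(x_{2p-2}\,v_{p1}^{-1}u_{p1}\,x_{2p-1}^{-1},\; x_{2p-2}\,b_p\,x_{2p-1}^{-1})\}$, $W_{4(p-1)+1}=\{(x_{2p-1}\,u_{pj}\,x_{2p-1}^{-1},\; x_{2p-1}\,\phi_p(j)\,x_{2p-1}^{-1}) : 2\le j\le n-1\}$, $W_{4(p-1)+2}=\{(x_{2p-1}\,u_{pn}v_{pn}^{-1}\,x_{2p}^{-1},\; x_{2p-1}\,b_p^{-1}\,x_{2p}^{-1})\}$, $W_{4(p-1)+3}=\{(x_{2p}\,v_{pj}^{-1}\,x_{2p}^{-1},\; x_{2p}\,\psi_p(j)\,x_{2p}^{-1}) : 2\le j\le n-1\}$, and $W=W_0\cup W_1\cup\cdots\cup W_{15}$ (a set of $8(n-1)$ pairs). *)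

theory Defs
  imports Main
begin

text \<open>A letter of a free group word is a generator with a sign: (True, g) is g,
 (False, g) is g^-1. Elements of the free group F(H) are the reduced words over H;
 the identity is the empty word.\<close>

type_synonym 'g fword = "(bool \<times> 'g) list"

definition inv_letter :: "bool \<times> 'g \<Rightarrow> bool \<times> 'g" where
  "inv_letter x = (\<not> fst x, snd x)"

fun fred :: "'g fword \<Rightarrow> 'g fword" where
  "fred [] = []"
| "fred (x # xs) = (case fred xs of [] \<Rightarrow> [x]
      | y # ys \<Rightarrow> (if y = inv_letter x then ys else x # y # ys))"

definition reduced :: "'g fword \<Rightarrow> bool" where
  "reduced w \<longleftrightarrow> (\<forall>i. Suc i < length w \<longrightarrow> w ! Suc i \<noteq> inv_letter (w ! i))"

definition free_group :: "'g set \<Rightarrow> 'g fword set" where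
  "free_group H = {w. reduced w \<and> snd ` set w \<subseteq> H}"

definition fmult :: "'g fword \<Rightarrow> 'g fword \<Rightarrow> 'g fword" where
  "fmult u v = fred (u @ v)"

definition finv :: "'g fword \<Rightarrow> 'g fword" where
  "finv w = rev (map inv_letter w)"

definition fprod :: "'g fword list \<Rightarrow> 'g fword" where
  "fprod ws = foldr fmult ws []"

definition fgen :: "'g \<Rightarrow> 'g fword" where
  "fgen g = [(True, g)]"

datatype ab = a | b

datatype gam = GA nat | GB nat | GX nat

definition Gamma :: "gam set" where
  "Gamma = {GA i | i. i \<in> {1..4}} \<union> {GB i | i. i \<in> {1..4}} \<union> {GX k | k. k \<in> {1..8}}"

definition delta :: "nat \<Rightarrow> ab list \<Rightarrow> gam fword" where
  "delta i w = map (\<lambda>c. (True, case c of a \<Rightarrow> GA i | b \<Rightarrow> GB i)) w"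

definition xg :: "nat \<Rightarrow> gam fword" where
  "xg k = fgen (GX (if k = 0 then 8 else k))"

definition phi :: "nat \<Rightarrow> nat \<Rightarrow> gam fword" where
  "phi i j = replicate j (True, GA i) @ [(True, GB i)]"

definition psi :: "nat \<Rightarrow> nat \<Rightarrow> gam fword" where
  "psi i j = replicate j (False, GA i) @ [(False, GB i)]"

definition Wset :: "nat \<Rightarrow> (nat \<Rightarrow> ab list) \<Rightarrow> (nat \<Rightarrow> ab list) \<Rightarrow> (gam fword \<times> gam fword) set" where
  "Wset n u v = (\<Union>p\<in>{1..4::nat}.
     {(fprod [xg (2*p-2), finv (delta p (v 1)), delta p (u 1), finv (xg (2*p-1))],
       fprod [xg (2*p-2), fgen (GB p), finv (xg (2*p-1))])}
   \<union> {(fprod [xg (2*p-1), delta p (u j), finv (xg (2*p-1))],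
       fprod [xg (2*p-1), phi p j, finv (xg (2*p-1))]) | j. 2 \<le> j \<and> j \<le> n - 1}
   \<union> {(fprod [xg (2*p-1), delta p (u n), finv (delta p (v n)), finv (xg (2*p))],
       fprod [xg (2*p-1), finv (fgen (GB p)), finv (xg (2*p))])}
   \<union> {(fprod [xg (2*p), finv (delta p (v j)), finv (xg (2*p))],
       fprod [xg (2*p), psi p j, finv (xg (2*p))]) | j. 2 \<le> j \<and> j \<le> n - 1})"

definition rpcp_solution :: "nat \<Rightarrow> (nat \<Rightarrow> ab list) \<Rightarrow> (nat \<Rightarrow> ab list) \<Rightarrow> nat list \<Rightarrow> bool" where
  "rpcp_solution n u v ls \<longleftrightarrow> (\<forall>l\<in>set ls. 2 \<le> l \<and> l \<le> n - 1) \<and>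
     u 1 @ concat (map u ls) @ u n = v 1 @ concat (map v ls) @ v n"

definition icp_solution :: "('g fword \<times> 'g fword) set \<Rightarrow> ('g fword \<times> 'g fword) list \<Rightarrow> bool" where
  "icp_solution W ps \<longleftrightarrow> ps \<noteq> [] \<and> set ps \<subseteq> W \<and>
     fprod (map fst ps) = [] \<and> fprod (map snd ps) = []"

end

theory Submission imports Defs begin

(*
  Write X_q for the generator x_q (with X_0 = X_8).  Given a solution
  l_1 ... l_k of the restricted PCP instance, for each p = 1..4 take the block of pairs
      W_{4(p-1)},  W_{4(p-1)+1}(l_1) ... W_{4(p-1)+1}(l_k),  W_{4(p-1)+2},
      W_{4(p-1)+3}(l_k) ... W_{4(p-1)+3}(l_1).
  In each component the inner conjugators telescope, so the block multiplies to
  X_{2p-2} M X_{2p}^-1, where the middle word M is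
      v_1^-1 u_1 u_{l_1}..u_{l_k} u_n v_n^-1 v_{l_k}^-1..v_{l_1}^-1   (first component),
      b (a^{l_1} b)..(a^{l_k} b) b^-1 (a^-{l_k} b^-1)..(a^-{l_1} b^-1)  (second component).
  The first is trivial because the PCP solution is an equation of words, the second
  is of the form P P^-1.  The four blocks then telescope to X_0 X_8^-1 = 1.
  The file first develops free reduction as a congruence that cancels w w^-1, then
  general telescoping facts for products of conjugated words, then the concrete
  blocks, and finally assembles the solution of the Identity Correspondence Problem.
*)

lemma inv_letter_inv_letter [simp]: "inv_letter (inv_letter x) = x"
  by (simp add: inv_letter_def)

lemma reduced_Nil [simp]: "reduced []" and reduced_single [simp]: "reduced [x]"
  by (auto simp: reduced_def)

lemma reduced_Cons2: "reduced (x # y # ys) \<longleftrightarrow> y \<noteq> inv_letter x \<and> reduced (y # ys)"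
  by (auto simp: reduced_def nth_Cons split: nat.splits)

lemma reduced_tl: "reduced (y # ys) \<Longrightarrow> reduced ys"
  by (cases ys) (auto simp: reduced_Cons2)

lemma reduced_fred: "reduced (fred w)"
  by (induction w) (auto split: list.splits simp: reduced_Cons2 dest: reduced_tl)

lemma fred_reduced: "reduced w \<Longrightarrow> fred w = w"
proof (induction w)
  case (Cons x w)
  then show ?case
    by (cases w) (auto simp: reduced_Cons2 dest: reduced_tl)
qed simp

lemma fred_idem [simp]: "fred (fred w) = fred w"
  by (simp add: fred_reduced reduced_fred)

text \<open>The delicate
  case is when fred ys starts with x: reducedness of fred ys then guarantees that
  reinserting x does not trigger a further cancellation.\<close>
lemma fred_cancel_letter: "fred (x # inv_letter x # ys) = fred ys"
proof (cases "fred ys")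
  case (Cons y zs)
  have reduced: "reduced (y # zs)" using Cons reduced_fred by metis
  show ?thesis
  proof (cases "y = x")
    case True
    then show ?thesis using Cons reduced
      by (cases zs) (auto simp: reduced_Cons2)
  next
    case False
    then have "y \<noteq> inv_letter (inv_letter x)" by simp
    then show ?thesis using Cons False by (auto simp: inv_letter_def)
  qed
qed simp

lemma fred_append_fred_right: "fred (xs @ fred ys) = fred (xs @ ys)"
  by (induction xs) auto

lemma fred_append_fred_left: "fred (fred xs @ ys) = fred (xs @ ys)"
proof (induction xs)
  case (Cons x xs)
  have "fred (x # xs @ ys) = fred (x # fred (xs @ ys))"
    using fred_append_fred_right[of "[x]"] by simp
  also have "\<dots> = fred (x # fred xs @ ys)"
    using Cons.IH fred_append_fred_right[of "[x]"] by simp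
  also have "\<dots> = fred (fred (x # xs) @ ys)"
  proof (cases "fred xs")
    case (Cons y zs)
    then show ?thesis using fred_cancel_letter[of x "zs @ ys"] by auto
  qed simp
  finally show ?case by simp
qed simp

lemma fred_cong: "fred w = fred w' \<Longrightarrow> fred (xs @ w @ ys) = fred (xs @ w' @ ys)"
  by (metis fred_append_fred_left fred_append_fred_right)

lemma fred_cancel_inverse: "fred (xs @ w @ finv w @ ys) = fred (xs @ ys)"
proof (induction w arbitrary: xs ys)
  case (Cons x w)
  have "fred (xs @ (x # w) @ finv (x # w) @ ys)
      = fred ((xs @ [x]) @ w @ finv w @ (inv_letter x # ys))"
    by (simp add: finv_def)
  also have "\<dots> = fred (xs @ x # inv_letter x # ys)"
    using Cons.IH[of "xs @ [x]" "inv_letter x # ys"] by simp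
  also have "\<dots> = fred (xs @ ys)"
    by (metis fred_append_fred_right fred_cancel_letter)
  finally show ?case .
qed (simp add: finv_def)

lemma finv_finv [simp]: "finv (finv w) = w"
  by (simp add: finv_def rev_map comp_def)

lemma fred_cancel_inverse': "fred (xs @ finv w @ w @ ys) = fred (xs @ ys)"
  using fred_cancel_inverse[of xs "finv w" ys] by simp

lemma fprod_eq_fred: "fprod ws = fred (concat ws)"
  by (induction ws) (auto simp: fprod_def fmult_def fred_append_fred_right)

lemma fred_concat_fred: "fred (concat (map fred ws)) = fred (concat ws)"
proof (induction ws)
  case (Cons w ws)
  then show ?case
    by (metis concat.simps(2) list.simps(9) fred_append_fred_left fred_append_fred_right)
qed simp

lemma fred_concat_cong:
  assumes "\<And>i. i \<in> set xs \<Longrightarrow> fred (F i) = fred (G i)"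
  shows "fred (concat (map F xs)) = fred (concat (map G xs))"
proof -
  have "fred (concat (map F xs)) = fred (concat (map fred (map F xs)))"
    by (rule fred_concat_fred[symmetric])
  also have "\<dots> = fred (concat (map fred (map G xs)))"
    using assms by (simp add: comp_def cong: map_cong)
  also have "\<dots> = fred (concat (map G xs))"
    by (rule fred_concat_fred)
  finally show ?thesis .
qed

lemma fred_conjugates:
  "fred (concat (map (\<lambda>j. g @ h j @ finv g) ms)) = fred (g @ concat (map h ms) @ finv g)"
proof (induction ms)
  case Nil
  show ?case using fred_cancel_inverse[of "[]" g "[]"] by simp
next
  case (Cons m ms)
  let ?H = "concat (map h ms)"
  have "fred (concat (map (\<lambda>j. g @ h j @ finv g) (m # ms)))
      = fred ((g @ h m @ finv g) @ (g @ ?H @ finv g) @ [])"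
    using fred_cong[OF Cons.IH, of "g @ h m @ finv g" "[]"] by simp
  also have "\<dots> = fred (g @ (h m @ ?H) @ finv g)"
    using fred_cancel_inverse'[of "g @ h m" g "?H @ finv g"] by simp
  finally show ?case by simp
qed

lemma fred_telescope:
  "fred (concat (map (\<lambda>i. g i @ finv (g (Suc i))) [0..<k])) = fred (g 0 @ finv (g k))"
proof (induction k)
  case 0
  show ?case using fred_cancel_inverse[of "[]" "g 0" "[]"] by simp
next
  case (Suc k)
  have "fred (concat (map (\<lambda>i. g i @ finv (g (Suc i))) [0..<Suc k]))
      = fred ([] @ (g 0 @ finv (g k)) @ (g k @ finv (g (Suc k))))"
    using fred_cong[OF Suc.IH, of "[]" "g k @ finv (g (Suc k))"] by simp
  also have "\<dots> = fred (g 0 @ finv (g (Suc k)))"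
    using fred_cancel_inverse'[of "g 0" "g k" "finv (g (Suc k))"] by simp
  finally show ?case .
qed

text \<open>The shape shared by both components of a block of W: an entry word g0 A g1^-1,
  conjugates of f j by g1, a turning word g1 C g2^-1, and conjugates of h j by g2
  in reverse order.\<close>
definition block_words ::
  "'g fword \<Rightarrow> 'g fword \<Rightarrow> 'g fword \<Rightarrow> 'g fword \<Rightarrow> (nat \<Rightarrow> 'g fword) \<Rightarrow> 'g fword
     \<Rightarrow> (nat \<Rightarrow> 'g fword) \<Rightarrow> nat list \<Rightarrow> 'g fword list" where
  "block_words g0 g1 g2 A f C h ls =
     [g0 @ A @ finv g1] @ map (\<lambda>j. g1 @ f j @ finv g1) ls
     @ [g1 @ C @ finv g2] @ map (\<lambda>j. g2 @ h j @ finv g2) (rev ls)"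

lemma fred_block_words:
  assumes middle: "fred (A @ concat (map f ls) @ C @ concat (map h (rev ls))) = []"
  shows "fred (concat (map fred (block_words g0 g1 g2 A f C h ls))) = fred (g0 @ finv g2)"
proof -
  let ?F = "concat (map f ls)" and ?H = "concat (map h (rev ls))"
  have "fred (concat (map fred (block_words g0 g1 g2 A f C h ls)))
      = fred ((g0 @ A @ finv g1) @ concat (map (\<lambda>j. g1 @ f j @ finv g1) ls)
              @ (g1 @ C @ finv g2) @ concat (map (\<lambda>j. g2 @ h j @ finv g2) (rev ls)))"
    unfolding fred_concat_fred block_words_def by simp
  also have "\<dots> = fred ((g0 @ A @ finv g1) @ (g1 @ ?F @ finv g1)
              @ (g1 @ C @ finv g2) @ concat (map (\<lambda>j. g2 @ h j @ finv g2) (rev ls)))"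
    by (rule fred_cong[OF fred_conjugates])
  also have "\<dots> = fred (((g0 @ A @ finv g1) @ (g1 @ ?F @ finv g1) @ (g1 @ C @ finv g2))
              @ (g2 @ ?H @ finv g2) @ [])"
    using fred_cong[OF fred_conjugates, of "(g0 @ A @ finv g1) @ (g1 @ ?F @ finv g1) @ (g1 @ C @ finv g2)"
        g2 h "rev ls" "[]"]
    by simp
  also have "\<dots> = fred (g0 @ (A @ ?F @ C @ ?H) @ finv g2)"
    using fred_cancel_inverse'[of "g0 @ A" g1 "?F @ finv g1 @ g1 @ C @ finv g2 @ g2 @ ?H @ finv g2"]
      fred_cancel_inverse'[of "g0 @ A @ ?F" g1 "C @ finv g2 @ g2 @ ?H @ finv g2"]
      fred_cancel_inverse'[of "g0 @ A @ ?F @ C" g2 "?H @ finv g2"]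
    by simp
  also have "\<dots> = fred (g0 @ [] @ finv g2)"
    using fred_cong[of "A @ ?F @ C @ ?H" "[]" g0 "finv g2"] middle by simp
  finally show ?thesis by simp
qed

lemma finv_append: "finv (w @ w') = finv w' @ finv w"
  by (simp add: finv_def)

lemma finv_concat: "finv (concat (map F ls)) = concat (map (\<lambda>j. finv (F j)) (rev ls))"
  by (induction ls) (auto simp: finv_def)

lemma fred_pcp_middle:
  assumes "U 1 @ concat (map U ls) @ U n = V 1 @ concat (map V ls) @ V n"
  shows "fred ((finv (V 1) @ U 1) @ concat (map U ls) @ (U n @ finv (V n))
               @ concat (map (\<lambda>j. finv (V j)) (rev ls))) = []"
proof -
  let ?V = "concat (map V ls)"
  have "(finv (V 1) @ U 1) @ concat (map U ls) @ (U n @ finv (V n))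
          @ concat (map (\<lambda>j. finv (V j)) (rev ls))
      = finv (V 1) @ V 1 @ ?V @ V n @ finv (V n) @ finv ?V"
    using assms by (simp add: finv_concat)
  then show ?thesis
    using fred_cancel_inverse'[of "[]" "V 1"] fred_cancel_inverse[of ?V "V n"]
      fred_cancel_inverse[of "[]" ?V "[]"]
    by simp
qed

lemma delta_concat: "delta p (concat (map u ls)) = concat (map (\<lambda>j. delta p (u j)) ls)"
  by (induction ls) (auto simp: delta_def)

lemma shift_across_product:
  "c @ concat (map (\<lambda>j. r j @ c) ms) = concat (map (\<lambda>j. c @ r j) ms) @ c"
  by (induction ms) auto

text \<open>Second components: b phi(l_1)..phi(l_k) b^-1 psi(l_k)..psi(l_1) has the form P P^-1,
  since psi(j) = a^-j b^-1 while phi(j)^-1 = b^-1 a^-j.\<close>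
lemma fred_phi_psi_middle:
  "fred (fgen (GB p) @ concat (map (phi p) ls) @ finv (fgen (GB p))
         @ concat (map (psi p) (rev ls))) = []"
proof -
  let ?P = "fgen (GB p) @ concat (map (phi p) ls)"
  let ?c = "[(False, GB p)]" and ?r = "\<lambda>j. replicate j (False, GA p)"
  have "finv (phi p j) = ?c @ ?r j" for j
    by (simp add: phi_def finv_def inv_letter_def)
  then have "finv ?P = concat (map (\<lambda>j. ?c @ ?r j) (rev ls)) @ ?c"
    by (simp only: finv_append finv_concat) (simp add: fgen_def finv_def inv_letter_def)
  also have "\<dots> = finv (fgen (GB p)) @ concat (map (psi p) (rev ls))"
    by (simp only: shift_across_product[symmetric]) (simp add: psi_def[abs_def] fgen_def finv_def inv_letter_def)
  finally show ?thesis
    using fred_cancel_inverse[of "[]" ?P "[]"] by simp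
qed

definition icp_block ::
  "nat \<Rightarrow> (nat \<Rightarrow> ab list) \<Rightarrow> (nat \<Rightarrow> ab list) \<Rightarrow> nat list \<Rightarrow> nat \<Rightarrow> (gam fword \<times> gam fword) list" where
  "icp_block n u v ls p =
     [(fprod [xg (2*p-2), finv (delta p (v 1)), delta p (u 1), finv (xg (2*p-1))],
       fprod [xg (2*p-2), fgen (GB p), finv (xg (2*p-1))])]
   @ map (\<lambda>j. (fprod [xg (2*p-1), delta p (u j), finv (xg (2*p-1))],
                fprod [xg (2*p-1), phi p j, finv (xg (2*p-1))])) ls
   @ [(fprod [xg (2*p-1), delta p (u n), finv (delta p (v n)), finv (xg (2*p))],
       fprod [xg (2*p-1), finv (fgen (GB p)), finv (xg (2*p))])]
   @ map (\<lambda>j. (fprod [xg (2*p), finv (delta p (v j)), finv (xg (2*p))],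
                fprod [xg (2*p), psi p j, finv (xg (2*p))])) (rev ls)"

lemma icp_block_subset:
  assumes "p \<in> {1..4}" and "\<forall>l\<in>set ls. 2 \<le> l \<and> l \<le> n - 1"
  shows "set (icp_block n u v ls p) \<subseteq> Wset n u v"
  unfolding icp_block_def set_append set_map set_rev list.set
  by (intro Un_least image_subsetI insert_subsetI empty_subsetI;
      unfold Wset_def; rule UN_I[OF assms(1)]; use assms(2) in blast)

lemma icp_block_fst:
  assumes "u 1 @ concat (map u ls) @ u n = v 1 @ concat (map v ls) @ v n"
  shows "fred (concat (map fst (icp_block n u v ls p))) = fred (xg (2*p-2) @ finv (xg (2*p)))"
proof -
  have "map fst (icp_block n u v ls p) = map fred (block_words (xg (2*p-2)) (xg (2*p-1)) (xg (2*p))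
          (finv (delta p (v 1)) @ delta p (u 1)) (\<lambda>j. delta p (u j))
          (delta p (u n) @ finv (delta p (v n))) (\<lambda>j. finv (delta p (v j))) ls)"
    by (simp add: icp_block_def block_words_def fprod_eq_fred)
  moreover have "delta p (u 1) @ concat (map (\<lambda>j. delta p (u j)) ls) @ delta p (u n)
      = delta p (v 1) @ concat (map (\<lambda>j. delta p (v j)) ls) @ delta p (v n)"
    using arg_cong[OF assms, of "delta p"] by (simp add: delta_def delta_concat[unfolded delta_def])
  ultimately show ?thesis
    using fred_block_words[OF fred_pcp_middle[of "\<lambda>j. delta p (u j)" ls n "\<lambda>j. delta p (v j)"]]
    by simp
qed

lemma icp_block_snd:
  "fred (concat (map snd (icp_block n u v ls p))) = fred (xg (2*p-2) @ finv (xg (2*p)))"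
proof -
  have "map snd (icp_block n u v ls p) = map fred (block_words (xg (2*p-2)) (xg (2*p-1)) (xg (2*p))
          (fgen (GB p)) (phi p) (finv (fgen (GB p))) (psi p) ls)"
    by (simp add: icp_block_def block_words_def fprod_eq_fred)
  then show ?thesis
    using fred_block_words[OF fred_phi_psi_middle] by simp
qed

lemma concat_map_concat:
  "concat (map F (concat xss)) = concat (map (\<lambda>xs. concat (map F xs)) xss)"
  by (induction xss) auto

text \<open>Four consecutive blocks, each reducing to x_{2p-2} x_{2p}^-1, multiply to the
  identity because x_0 = x_8.\<close>
lemma fprod_four_blocks:
  assumes "\<And>p. fred (concat (map F (B p))) = fred (xg (2*p-2) @ finv (xg (2*p)))"
  shows "fprod (map F (concat (map (\<lambda>i. B (Suc i)) [0..<4]))) = []"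
proof -
  let ?g = "\<lambda>i. xg (2*i)"
  have "fprod (map F (concat (map (\<lambda>i. B (Suc i)) [0..<4])))
      = fred (concat (map (\<lambda>i. concat (map F (B (Suc i)))) [0..<4]))"
    by (simp only: fprod_eq_fred concat_map_concat map_map comp_def)
  also have "\<dots> = fred (concat (map (\<lambda>i. ?g i @ finv (?g (Suc i))) [0..<4]))"
    by (rule fred_concat_cong) (simp add: assms)
  also have "\<dots> = fred (?g 0 @ finv (?g 4))"
    by (rule fred_telescope)
  also have "\<dots> = []"
    using fred_cancel_inverse[of "[]" "xg 8" "[]"] by (simp add: xg_def)
  finally show ?thesis .
qed

theorem mainTheorem1:
  fixes n :: nat and u v :: "nat \<Rightarrow> ab list"
  assumes "n \<ge> 3"
    and "\<exists>ls. rpcp_solution n u v ls"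
  shows "\<exists>ps. icp_solution (Wset n u v) ps"
proof -
  obtain ls where range: "\<forall>l\<in>set ls. 2 \<le> l \<and> l \<le> n - 1"
    and eq: "u 1 @ concat (map u ls) @ u n = v 1 @ concat (map v ls) @ v n"
    using assms(2) unfolding rpcp_solution_def by blast
  let ?ps = "concat (map (\<lambda>i. icp_block n u v ls (Suc i)) [0..<4])"
  have "set (icp_block n u v ls (Suc i)) \<subseteq> Wset n u v" if "i < 4" for i
    using that by (intro icp_block_subset[OF _ range]) simp
  then have "set ?ps \<subseteq> Wset n u v" by (simp add: UN_subset_iff)
  moreover have "?ps \<noteq> []" by (simp add: icp_block_def upt_rec)
  moreover have "fprod (map fst ?ps) = []"
    by (rule fprod_four_blocks) (rule icp_block_fst[OF eq])
  moreover have "fprod (map snd ?ps) = []"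
    by (rule fprod_four_blocks) (rule icp_block_snd)
  ultimately show ?thesis
    unfolding icp_solution_def by blast
qed

end
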